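(* Let $G$ be a finite simple graph of order $n$ and let $u$ be a vertex of $G$. Then \[\mathrm{dp}_{G^{c}}(u)=\big(\mathrm{dp}(G)-\mathrm{dp}_G(u)-x^{\deg_G u}\big)^{\curlywedge (n-1)-}.\]
   Context: For a vertex $w$ of a simple graph $\Gamma$, the degree polynomial $\mathrm{dp}_\Gamma(w)\in\mathbb{Z}[x]$ is the polynomial in which the coefficient of $x^{i}$ is the number of neighbors of $w$ in $\Gamma$ having degree $i$ in $\Gamma$ ($\mathrm{dp}_\Gamma(w)=0$ if $w$ is isolated). The degree polynomial of the graph $\Gamma$ is $\mathrm{dp}(\Gamma)=\sum_{i\ge0} t_i x^i$, where $t_i$ is the number of vertices of $\Gamma$ of degree $i$ (so $t_0$ counts isolated vertices). For a polynomial $f=\sum_i a_i x^i$ with nonnegative integer coefficients and $\deg f\le m$, $f^{\curlywedge m-}=\sum_i a_i x^{m-i}$ (and $0^{\curlywedge m-}=0$). $G^{c}$ denotes the complement of $G$: same vertex set, with two distinct vertices adjacent in $G^c$ iff they are not adjacent in $G$. *)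

theory Defs
  imports "HOL-Computational_Algebra.Polynomial"
begin

definition simple_graph :: "'a set \<Rightarrow> ('a \<Rightarrow> 'a \<Rightarrow> bool) \<Rightarrow> bool" where
  "simple_graph V adj \<longleftrightarrow> finite V \<and> (\<forall>x y. adj x y \<longrightarrow> x \<in> V \<and> y \<in> V)
     \<and> (\<forall>x y. adj x y \<longrightarrow> adj y x) \<and> (\<forall>x. \<not> adj x x)"

definition neighbors :: "'a set \<Rightarrow> ('a \<Rightarrow> 'a \<Rightarrow> bool) \<Rightarrow> 'a \<Rightarrow> 'a set" where
  "neighbors V adj v = {w \<in> V. adj v w}"

definition degree_in :: "'a set \<Rightarrow> ('a \<Rightarrow> 'a \<Rightarrow> bool) \<Rightarrow> 'a \<Rightarrow> nat" where
  "degree_in V adj v = card (neighbors V adj v)"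

definition compl_adj :: "'a set \<Rightarrow> ('a \<Rightarrow> 'a \<Rightarrow> bool) \<Rightarrow> 'a \<Rightarrow> 'a \<Rightarrow> bool" where
  "compl_adj V adj x y \<longleftrightarrow> x \<in> V \<and> y \<in> V \<and> x \<noteq> y \<and> \<not> adj x y"

definition dp_vertex :: "'a set \<Rightarrow> ('a \<Rightarrow> 'a \<Rightarrow> bool) \<Rightarrow> 'a \<Rightarrow> int poly" where
  "dp_vertex V adj w = (\<Sum>v \<in> neighbors V adj w. monom 1 (degree_in V adj v))"

definition dp_graph :: "'a set \<Rightarrow> ('a \<Rightarrow> 'a \<Rightarrow> bool) \<Rightarrow> int poly" where
  "dp_graph V adj = (\<Sum>v \<in> V. monom 1 (degree_in V adj v))"

text \<open>f^{m-}: sum a_i x^(m-i) (intended for deg f \<le> m).\<close>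
definition poly_flip :: "nat \<Rightarrow> int poly \<Rightarrow> int poly" where
  "poly_flip m f = (\<Sum>i\<le>m. monom (coeff f i) (m - i))"

end

theory Submission
  imports Defs
begin

(* In the complement, a vertex v has degree (n - 1) - deg v, so reversing the coefficients
   with respect to n - 1 turns x^(deg v) into x^(deg v in the complement).  The neighbours of u
   in the complement are exactly the vertices other than u and its neighbours in G, and the
   sum of x^(deg v) over those is dp(G) - dp_G(u) - x^(deg u). *)

lemma poly_flip_add: "poly_flip m (f + g) = poly_flip m f + poly_flip m g"
  unfolding poly_flip_def by (simp add: add_monom[symmetric] sum.distrib)

lemma poly_flip_sum: "poly_flip m (\<Sum>a\<in>A. g a) = (\<Sum>a\<in>A. poly_flip m (g a))"
  using sum_comp_morphism[of "poly_flip m" g A]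
  by (simp add: poly_flip_add) (simp add: poly_flip_def)

lemma poly_flip_monom:
  assumes "d \<le> m"
  shows "poly_flip m (monom c d) = monom c (m - d)"
proof -
  have "poly_flip m (monom c d) = (\<Sum>i\<le>m. if d = i then monom c (m - i) else 0)"
    unfolding poly_flip_def by (intro sum.cong) (auto simp: coeff_monom)
  also have "\<dots> = monom c (m - d)"
    using assms by (simp add: sum.delta)
  finally show ?thesis .
qed

lemma neighbors_subset: "neighbors V adj v \<subseteq> V"
  unfolding neighbors_def by auto

lemma
  assumes "simple_graph V adj"
  shows finite_neighbors: "finite (neighbors V adj v)"
    and not_in_neighbors: "v \<notin> neighbors V adj v"
  using assms unfolding simple_graph_def neighbors_def by auto

lemma card_insert_neighbors:
  assumes "simple_graph V adj"
  shows "card (insert v (neighbors V adj v)) = degree_in V adj v + 1"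
  using assms by (simp add: finite_neighbors not_in_neighbors degree_in_def)

lemma degree_in_le:
  assumes "simple_graph V adj" and "v \<in> V"
  shows "degree_in V adj v \<le> card V - 1"
proof -
  have "insert v (neighbors V adj v) \<subseteq> V"
    using assms(2) neighbors_subset by fast
  then have "card (insert v (neighbors V adj v)) \<le> card V"
    using assms(1) by (intro card_mono) (simp_all add: simple_graph_def)
  then show ?thesis
    using assms(1) by (simp add: card_insert_neighbors)
qed

lemma neighbors_compl_adj:
  assumes "v \<in> V"
  shows "neighbors V (compl_adj V adj) v = V - insert v (neighbors V adj v)"
  using assms unfolding neighbors_def compl_adj_def by auto

lemma degree_in_compl_adj:
  assumes "simple_graph V adj" and "v \<in> V"
  shows "degree_in V (compl_adj V adj) v = card V - 1 - degree_in V adj v"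
proof -
  have "insert v (neighbors V adj v) \<subseteq> V"
    using assms(2) neighbors_subset by fast
  moreover have "finite V"
    using assms(1) by (simp add: simple_graph_def)
  ultimately have "card (V - insert v (neighbors V adj v))
      = card V - card (insert v (neighbors V adj v))"
    by (meson card_Diff_subset finite_subset)
  then show ?thesis
    using assms by (simp add: degree_in_def neighbors_compl_adj card_insert_neighbors)
qed

lemma dp_graph_split:
  assumes "simple_graph V adj" and "u \<in> V"
  shows "dp_graph V adj = monom 1 (degree_in V adj u) + dp_vertex V adj u
    + (\<Sum>v \<in> V - insert u (neighbors V adj u). monom 1 (degree_in V adj v))"
proof -
  let ?N = "insert u (neighbors V adj u)"
  have "finite V"
    using assms(1) by (simp add: simple_graph_def)
  moreover have "?N \<subseteq> V"
    using assms(2) neighbors_subset by fast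
  ultimately have "dp_graph V adj = (\<Sum>v\<in>?N. monom 1 (degree_in V adj v))
      + (\<Sum>v \<in> V - ?N. monom 1 (degree_in V adj v))"
    unfolding dp_graph_def by (metis sum.subset_diff add.commute)
  then show ?thesis
    using assms(1) by (simp add: dp_vertex_def finite_neighbors not_in_neighbors)
qed

theorem theorem4p19:
  fixes V :: "'a set" and adj :: "'a \<Rightarrow> 'a \<Rightarrow> bool" and u :: 'a and n :: nat
  assumes "simple_graph V adj" and "card V = n" and "u \<in> V"
  shows "dp_vertex V (compl_adj V adj) u
    = poly_flip (n - 1) (dp_graph V adj - dp_vertex V adj u - monom 1 (degree_in V adj u))"
proof -
  let ?W = "V - insert u (neighbors V adj u)"
  have "dp_vertex V (compl_adj V adj) u = (\<Sum>v\<in>?W. monom 1 (n - 1 - degree_in V adj v))"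
    unfolding dp_vertex_def neighbors_compl_adj[OF assms(3)]
    using assms(1,2) by (intro sum.cong) (auto simp: degree_in_compl_adj)
  also have "\<dots> = poly_flip (n - 1) (\<Sum>v\<in>?W. monom 1 (degree_in V adj v))"
    unfolding poly_flip_sum
    by (intro sum.cong refl) (metis DiffD1 assms(1,2) degree_in_le poly_flip_monom)
  also have "\<dots> = poly_flip (n - 1)
      (dp_graph V adj - dp_vertex V adj u - monom 1 (degree_in V adj u))"
    using dp_graph_split[OF assms(1,3)] by simp
  finally show ?thesis .
qed

end
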